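(* Let $\{D_i\}_{i\in\mathbb{Z}}$ be non-negative integers and $d\in\mathbb{N}$. Set $D_i^d=\max\{D_i-d,0\}$ and, for $A\subset\mathbb{Z}$, $b(A)=\sum_{i\in A}D_i^d$. Then every finite cluster $C$ of claimed vertices on level $d$ satisfies $b(C)\le |C|-1$.
   Context: A vertex $i\in\mathbb{Z}$ is claimed on level $d$ iff $\sum_{k=i-m}^{i+m}D_k^d\ge m$ for some integer $m\ge1$. A cluster of claimed vertices is a set of consecutive vertices $\{i,\dots,i+n\}$ all of which are claimed, while $i-1$ and $i+n+1$ are not claimed. *)

theory Defs
  imports Main
begin

text \<open>Truncated degree D_i^d = max (D_i - d) 0 (nat subtraction truncates at 0).\<close>
definition Dlev :: "(int \<Rightarrow> nat) \<Rightarrow> nat \<Rightarrow> int \<Rightarrow> nat" where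
  "Dlev D d i = D i - d"

definition bsum :: "(int \<Rightarrow> nat) \<Rightarrow> nat \<Rightarrow> int set \<Rightarrow> nat" where
  "bsum D d A = (\<Sum>i\<in>A. Dlev D d i)"

definition claimed :: "(int \<Rightarrow> nat) \<Rightarrow> nat \<Rightarrow> int \<Rightarrow> bool" where
  "claimed D d i \<longleftrightarrow> (\<exists>m::nat. m \<ge> 1 \<and> (\<Sum>k\<in>{i - int m..i + int m}. Dlev D d k) \<ge> m)"

definition cluster :: "(int \<Rightarrow> nat) \<Rightarrow> nat \<Rightarrow> int set \<Rightarrow> bool" where
  "cluster D d C \<longleftrightarrow> (\<exists>i (n::nat). C = {i..i + int n} \<and> (\<forall>j\<in>C. claimed D d j)
      \<and> \<not> claimed D d (i - 1) \<and> \<not> claimed D d (i + int n + 1))"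

end

theory Submission
  imports Defs
begin

text \<open>A cluster \<open>{i..i+n}\<close> lies inside the window of radius \<open>n + 1\<close> around the unclaimed
  vertex \<open>i - 1\<close>, and that window carries less than \<open>n + 1\<close> units of truncated degree.\<close>

lemma window_sum_less_if_not_claimed:
  assumes "\<not> claimed D d i" and "m \<ge> 1"
  shows "(\<Sum>k\<in>{i - int m..i + int m}. Dlev D d k) < m"
  using assms unfolding claimed_def by (meson not_le)

lemma bsum_less_if_not_claimed:
  assumes "\<not> claimed D d i" and "m \<ge> 1" and "A \<subseteq> {i - int m..i + int m}"
  shows "bsum D d A < m"
proof -
  have "bsum D d A \<le> (\<Sum>k\<in>{i - int m..i + int m}. Dlev D d k)"
    unfolding bsum_def using assms(3) by (intro sum_mono2) auto
  also have "\<dots> < m"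
    using assms(1,2) by (rule window_sum_less_if_not_claimed)
  finally show ?thesis .
qed

text \<open>Clusters are intervals, hence finite.\<close>

theorem lemma3p2:
  fixes D :: "int \<Rightarrow> nat" and d :: nat and C :: "int set"
  assumes "cluster D d C" and "finite C"
  shows "bsum D d C \<le> card C - 1"
proof -
  obtain i and n :: nat where C: "C = {i..i + int n}" and left: "\<not> claimed D d (i - 1)"
    using assms(1) unfolding cluster_def by blast
  have "C \<subseteq> {(i - 1) - int (n + 1)..(i - 1) + int (n + 1)}"
    using C by auto
  with left have "bsum D d C < n + 1"
    by (intro bsum_less_if_not_claimed) auto
  moreover have "card C = n + 1"
    using C by simp
  ultimately show ?thesis
    by simp
qed

end
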